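(* Let $\mathbb{X},\mathbb{Y}$ be real Banach spaces, $A\subseteq\mathbb{X}$, and $T:\mathbb{X}\to\mathbb{Y}$ a bounded linear operator that preserves Birkhoff–James orthogonality at each point of $A$. Then $T$ preserves Birkhoff–James orthogonality at each point of $\overline{A}\cap\operatorname{Sm}\mathbb{X}$.
   Context: $u\perp_B v$ (Birkhoff–James orthogonality) means $\|u+\lambda v\|\ge\|u\|$ for all $\lambda\in\mathbb{R}$. $T$ preserves Birkhoff–James orthogonality at $x$ if $x\perp_B v$ implies $Tx\perp_B Tv$ for all $v\in\mathbb{X}$. For non-zero $z$, $J(z)=\{f\in\mathbb{X}^*:\|f\|=1,\ f(z)=\|z\|\}$; $z$ is smooth if $J(z)$ is a singleton, and $\operatorname{Sm}\mathbb{X}$ denotes the set of all smooth points of $\mathbb{X}$. $\overline{A}$ is the norm closure. *)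

theory Defs
  imports "HOL-Analysis.Analysis"
begin

definition bj_orth :: "'a::real_normed_vector \<Rightarrow> 'a \<Rightarrow> bool" where
  "bj_orth u v \<longleftrightarrow> (\<forall>t::real. norm (u + t *\<^sub>R v) \<ge> norm u)"

definition preserves_bj_at ::
  "('a::real_normed_vector \<Rightarrow> 'b::real_normed_vector) \<Rightarrow> 'a \<Rightarrow> bool" where
  "preserves_bj_at T x \<longleftrightarrow> (\<forall>v. bj_orth x v \<longrightarrow> bj_orth (T x) (T v))"

definition supp_funcs :: "'a::real_normed_vector \<Rightarrow> ('a \<Rightarrow> real) set" where
  "supp_funcs z = {f. bounded_linear f \<and> onorm f = 1 \<and> f z = norm z}"

definition smooth_points :: "'a::real_normed_vector set" where
  "smooth_points = {z. z \<noteq> 0 \<and> (\<exists>f. supp_funcs z = {f})}"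

end

theory Submission
  imports Defs "HOL-Library.Infinite_Set"
begin

text \<open>Let \<open>X n \<in> A\<close> converge to the smooth point \<open>x\<close>, and let \<open>g\<^sub>n\<close> be a norming functional
  at \<open>X n\<close>. For \<open>x \<bottom>\<^sub>B v\<close> put \<open>V n = v - (g\<^sub>n v / \<parallel>X n\<parallel>) X n\<close>; it lies in the kernel of \<open>g\<^sub>n\<close>, so
  \<open>X n \<bottom>\<^sub>B V n\<close> and therefore \<open>T (X n) \<bottom>\<^sub>B T (V n)\<close>. A cluster value \<open>c\<close> of \<open>g\<^sub>n v\<close> gives in the limit
  \<open>x \<bottom>\<^sub>B v - (c / \<parallel>x\<parallel>) x\<close>, i.e. a support functional at \<open>x\<close> with value \<open>c\<close> at \<open>v\<close>; as \<open>x \<bottom>\<^sub>B v\<close>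
  provides one with value \<open>0\<close>, smoothness forces \<open>c = 0\<close>. Hence \<open>V n \<rightarrow> v\<close>, and \<open>T x \<bottom>\<^sub>B T v\<close>
  because Birkhoff--James orthogonality is closed.

  The norming functionals come from Hahn--Banach, obtained here from a minimal sublinear
  functional below the norm (Zorn), which is necessarily linear.\<close>

definition sublinear :: "('a::real_vector \<Rightarrow> real) \<Rightarrow> bool" where
  "sublinear p \<longleftrightarrow> (\<forall>x y. p (x + y) \<le> p x + p y) \<and> (\<forall>c x. 0 \<le> c \<longrightarrow> p (c *\<^sub>R x) \<le> c * p x)"

lemma sublinearI:
  assumes "\<And>x y. p (x + y) \<le> p x + p y" "p 0 \<le> 0" "\<And>c x. 0 < c \<Longrightarrow> p (c *\<^sub>R x) \<le> c * p x"
  shows "sublinear p"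
  unfolding sublinear_def using assms by (metis less_eq_real_def mult_zero_left scaleR_zero_left)

lemma sublinear_add: "sublinear p \<Longrightarrow> p (x + y) \<le> p x + p y"
  by (simp add: sublinear_def)

lemma sublinear_scaleR: "sublinear p \<Longrightarrow> 0 \<le> c \<Longrightarrow> p (c *\<^sub>R x) \<le> c * p x"
  by (simp add: sublinear_def)

lemma sublinear_0: assumes "sublinear p" shows "p 0 = 0"
  using sublinear_add[OF assms, of 0 0] sublinear_scaleR[OF assms, of 0 0] by simp

lemma sublinear_scaleR_eq:
  assumes p: "sublinear p" and c: "0 \<le> c"
  shows "p (c *\<^sub>R x) = c * p x"
proof (cases "c = 0")
  case True
  then show ?thesis using sublinear_0[OF p] by simp
next
  case False
  with c have "c * p x = c * p ((1/c) *\<^sub>R (c *\<^sub>R x))" by simp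
  also have "\<dots> \<le> p (c *\<^sub>R x)"
    using sublinear_scaleR[OF p, of "1/c" "c *\<^sub>R x"] c False by (simp add: field_simps)
  finally show ?thesis using sublinear_scaleR[OF p c, of x] by linarith
qed

lemma sublinear_neg_le: "sublinear p \<Longrightarrow> - p (- x) \<le> p x"
  using sublinear_add[of p x "- x"] sublinear_0[of p] by simp

lemma sublinear_norm: "sublinear norm"
  by (simp add: sublinear_def norm_triangle_ineq)

lemma abs_le_norm_if_le_norm:
  fixes g :: "'a::real_normed_vector \<Rightarrow> real"
  assumes "linear g" "g \<le> norm"
  shows "\<bar>g x\<bar> \<le> norm x"
  using le_funD[OF assms(2), of x] le_funD[OF assms(2), of "- x"] linear_neg[OF assms(1), of x]
  by simp

text \<open>\<open>q'\<close> is an infimal convolution of \<open>q\<close> over the cone \<open>M\<close>; admissibility \<open>r \<le> q w\<close> keeps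
  the infimum bounded below.\<close>
lemma
  fixes q :: "'a::real_vector \<Rightarrow> real" and M :: "('a \<times> real) set"
  assumes q: "sublinear q" and M: "convex_cone M" and M_le: "\<And>w r. (w, r) \<in> M \<Longrightarrow> r \<le> q w"
  defines "q' \<equiv> \<lambda>y. INF (w, r)\<in>M. q (y + w) - r"
  shows sublinear_INF_cone: "sublinear q'"
    and INF_cone_le: "\<And>y w r. (w, r) \<in> M \<Longrightarrow> q' y \<le> q (y + w) - r"
proof -
  have M0: "(0, 0) \<in> M"
    using M by (simp add: convex_cone_iff zero_prod_def)
  have M_add: "(w + w', r + r') \<in> M" if "(w, r) \<in> M" "(w', r') \<in> M" for w r w' r'
    using convex_cone_add[OF M that] by simp
  have M_scale: "(c *\<^sub>R w, c * r) \<in> M" if "(w, r) \<in> M" "0 \<le> c" for w r c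
    using convex_cone_scaleR[OF M that(2) that(1)] by simp
  have bdd: "bdd_below ((\<lambda>(w, r). q (y + w) - r) ` M)" for y
  proof (rule bdd_belowI[where m = "- q (- y)"], clarsimp)
    fix w r assume "(w, r) \<in> M"
    with M_le have "r \<le> q w" by blast
    moreover have "q w \<le> q (y + w) + q (- y)"
      using sublinear_add[OF q, of "y + w" "- y"] by simp
    ultimately show "- q (- y) \<le> q (y + w) - r" by linarith
  qed
  show le: "q' y \<le> q (y + w) - r" if "(w, r) \<in> M" for y w r
    unfolding q'_def by (rule cINF_lower2[OF bdd that]) simp
  have glb: "z \<le> q' y" if "\<And>w r. (w, r) \<in> M \<Longrightarrow> z \<le> q (y + w) - r" for z y
    unfolding q'_def using M0 that by (intro cINF_greatest) auto
  show "sublinear q'"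
  proof (rule sublinearI)
    fix a b
    have "q' (a + b) - (q (b + w') - r') \<le> q' a" if m': "(w', r') \<in> M" for w' r'
    proof (rule glb)
      fix w r assume m: "(w, r) \<in> M"
      have "q' (a + b) \<le> q (a + b + (w + w')) - (r + r')" by (rule le[OF M_add[OF m m']])
      also have "q (a + b + (w + w')) \<le> q (a + w) + q (b + w')"
        using sublinear_add[OF q, of "a + w" "b + w'"] by (simp add: algebra_simps)
      finally show "q' (a + b) - (q (b + w') - r') \<le> q (a + w) - r" by linarith
    qed
    then have "q' (a + b) - q' a \<le> q' b" by (intro glb) force
    then show "q' (a + b) \<le> q' a + q' b" by linarith
  next
    show "q' 0 \<le> 0" using le[OF M0, of 0] sublinear_0[OF q] by simp
  next
    fix c :: real and a assume c: "0 < c"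
    have "q' (c *\<^sub>R a) / c \<le> q' a"
    proof (rule glb)
      fix w r assume m: "(w, r) \<in> M"
      have "q' (c *\<^sub>R a) \<le> q (c *\<^sub>R (a + w)) - c * r"
        using le[OF M_scale[OF m]] c by (simp add: scaleR_right_distrib)
      also have "\<dots> = c * (q (a + w) - r)"
        using c by (simp add: sublinear_scaleR_eq[OF q] right_diff_distrib)
      finally show "q' (c *\<^sub>R a) / c \<le> q (a + w) - r"
        using c by (simp add: field_simps)
    qed
    then show "q' (c *\<^sub>R a) \<le> c * q' a" using c by (simp add: field_simps)
  qed
qed

lemma sublinear_INF_chain:
  fixes C :: "('a::real_vector \<Rightarrow> real) set"
  assumes ne: "C \<noteq> {}" and sub: "\<And>q. q \<in> C \<Longrightarrow> sublinear q"
    and chain: "\<And>q q'. q \<in> C \<Longrightarrow> q' \<in> C \<Longrightarrow> q \<le> q' \<or> q' \<le> q"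
    and bdd: "\<And>y. bdd_below ((\<lambda>q. q y) ` C)"
  shows "sublinear (\<lambda>y. INF q\<in>C. q y)" (is "sublinear ?u")
proof (rule sublinearI)
  have le: "?u y \<le> q y" if "q \<in> C" for q y
    by (rule cINF_lower[OF bdd that])
  have glb: "z \<le> ?u y" if "\<And>q. q \<in> C \<Longrightarrow> z \<le> q y" for z y
    using ne that by (rule cINF_greatest)
  fix a b
  have "?u (a + b) - q' b \<le> ?u a" if q': "q' \<in> C" for q'
  proof (rule glb)
    fix q assume q: "q \<in> C"
    obtain m where m: "m \<in> C" "m \<le> q" "m \<le> q'"
      using chain[OF q q'] q q' by auto
    have "?u (a + b) \<le> m a + m b"
      using le[OF m(1)] sublinear_add[OF sub[OF m(1)]] order_trans by blast
    also have "\<dots> \<le> q a + q' b"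
      using m by (simp add: add_mono le_funD)
    finally show "?u (a + b) - q' b \<le> q a" by simp
  qed
  then have "?u (a + b) - ?u a \<le> ?u b" by (intro glb) force
  then show "?u (a + b) \<le> ?u a + ?u b" by simp
  obtain q where "q \<in> C" using ne by blast
  then show "?u 0 \<le> 0" using le[of q 0] sublinear_0[OF sub[of q]] by simp
  fix c :: real assume c: "0 < c"
  have "?u (c *\<^sub>R a) / c \<le> ?u a"
  proof (rule glb)
    fix q assume q: "q \<in> C"
    have "?u (c *\<^sub>R a) \<le> c * q a"
      using le[OF q] sublinear_scaleR[OF sub[OF q]] c order_trans by (meson less_imp_le)
    then show "?u (c *\<^sub>R a) / c \<le> q a" using c by (simp add: field_simps)
  qed
  then show "?u (c *\<^sub>R a) \<le> c * ?u a" using c by (simp add: field_simps)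
qed

lemma minimal_sublinear_imp_linear:
  fixes m :: "'a::real_vector \<Rightarrow> real"
  assumes m: "sublinear m" and minimal: "\<And>q. sublinear q \<Longrightarrow> q \<le> m \<Longrightarrow> q = m"
  shows "linear m"
proof -
  \<comment> \<open>by minimality, lowering \<open>m\<close> along the ray through \<open>(z, m z)\<close> leaves it unchanged\<close>
  have superadd: "m y + m z \<le> m (y + z)" for y z
  proof -
    define M where "M = {t *\<^sub>R (z, m z) | t. 0 \<le> t}"
    define q where "q = (\<lambda>y. INF (w, r)\<in>M. m (y + w) - r)"
    have M: "convex_cone M"
      unfolding convex_cone_iff
    proof (intro conjI ballI allI impI)
      show "0 \<in> M" unfolding M_def by (rule CollectI, rule exI[of _ 0]) (simp add: zero_prod_def)
      show "x + y \<in> M" if "x \<in> M" "y \<in> M" for x y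
        using that unfolding M_def by clarify (metis add_nonneg_nonneg scaleR_add_left)
      show "c *\<^sub>R x \<in> M" if "x \<in> M" "0 \<le> c" for x and c :: real
        using that unfolding M_def by clarify (metis mult_nonneg_nonneg scaleR_scaleR)
    qed
    have M_le: "r \<le> m w" if "(w, r) \<in> M" for w r
      using that sublinear_scaleR_eq[OF m] unfolding M_def by force
    have M_z: "(z, m z) \<in> M" "(0, 0) \<in> M"
      unfolding M_def by (auto intro: exI[of _ 1] exI[of _ 0] simp: zero_prod_def)
    have q_le: "q y \<le> m (y + w) - r" if "(w, r) \<in> M" for y w r
      unfolding q_def using INF_cone_le[OF m M M_le that] .
    have "q = m"
      using minimal[OF sublinear_INF_cone[OF m M M_le]] q_le[OF M_z(2)] by (simp add: q_def le_fun_def)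
    then show ?thesis using q_le[OF M_z(1), of y] by simp
  qed
  have add: "m (y + z) = m y + m z" for y z
    using superadd[of y z] sublinear_add[OF m, of y z] by linarith
  have neg: "m (- y) = - m y" for y
    using add[of y "- y"] sublinear_0[OF m] by simp
  have scale: "m (c *\<^sub>R y) = c * m y" for c y
  proof (cases "0 \<le> c")
    case True
    then show ?thesis by (rule sublinear_scaleR_eq[OF m])
  next
    case False
    then have "m (c *\<^sub>R y) = - m ((- c) *\<^sub>R y)" using neg[of "(- c) *\<^sub>R y"] by simp
    then show ?thesis using sublinear_scaleR_eq[OF m, of "- c" y] False by simp
  qed
  show ?thesis by (rule linearI) (simp_all add: add scale)
qed

lemma sublinear_dominates_linear:
  fixes p :: "'a::real_vector \<Rightarrow> real"
  assumes p: "sublinear p"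
  shows "\<exists>g. linear g \<and> g \<le> p"
proof -
  define S where "S = {q. sublinear q \<and> q \<le> p}"
  have po: "partial_order_on S (relation_of (\<lambda>q q'. q' \<le> q) S)"
    by (rule partial_order_on_relation_ofI) auto
  have chain_bound: "\<exists>u\<in>S. \<forall>q\<in>C. u \<le> q" if C: "C \<in> Chains (relation_of (\<lambda>q q'. q' \<le> q) S)" for C
  proof (cases "C = {}")
    case True
    then show ?thesis using p by (auto simp: S_def)
  next
    case False
    have CS: "C \<subseteq> S" using Chains_relation_of[OF C] .
    have bdd: "bdd_below ((\<lambda>q. q y) ` C)" for y
    proof (rule bdd_belowI[where m = "- p (- y)"], clarify)
      fix q assume "q \<in> C"
      with CS have "sublinear q" "q (- y) \<le> p (- y)" by (auto simp: S_def le_fun_def)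
      then show "- p (- y) \<le> q y" using sublinear_neg_le[of q y] by linarith
    qed
    define u where "u = (\<lambda>y. INF q\<in>C. q y)"
    have u_le: "u \<le> q" if "q \<in> C" for q
      unfolding u_def le_fun_def using cINF_lower[OF bdd that] by blast
    have "sublinear u"
      unfolding u_def
    proof (rule sublinear_INF_chain[OF False _ _ bdd])
      show "sublinear q" if "q \<in> C" for q using that CS by (auto simp: S_def)
      show "q \<le> q' \<or> q' \<le> q" if "q \<in> C" "q' \<in> C" for q q'
        using C that unfolding Chains_def relation_of_def by auto
    qed
    moreover obtain q where "q \<in> C" using False by blast
    then have "u \<le> p" using u_le CS by (force simp: S_def)
    ultimately show ?thesis using u_le unfolding S_def by blast
  qed
  obtain m where m: "m \<in> S" and minimal: "\<And>q. q \<in> S \<Longrightarrow> q \<le> m \<Longrightarrow> q = m"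
    using predicate_Zorn[OF po chain_bound] by blast
  have "linear m"
  proof (rule minimal_sublinear_imp_linear)
    show "sublinear m" using m by (simp add: S_def)
    show "q = m" if "sublinear q" "q \<le> m" for q
      using minimal that m order_trans by (auto simp: S_def)
  qed
  then show ?thesis using m by (auto simp: S_def)
qed

lemma hahn_banach_pair:
  fixes p :: "'a::real_vector \<Rightarrow> real"
  assumes p: "sublinear p" and dom: "\<And>s t. s * a + t * c \<le> p (s *\<^sub>R x + t *\<^sub>R v)"
  shows "\<exists>g. linear g \<and> g \<le> p \<and> g x = a \<and> g v = c"
proof -
  define M where "M = span {(x, a), (v, c)}"
  have M: "convex_cone M"
    unfolding M_def by (rule subspace_imp_convex_cone[OF subspace_span])
  have M_iff: "(w, r) \<in> M \<longleftrightarrow> (\<exists>s t. w = s *\<^sub>R x + t *\<^sub>R v \<and> r = s * a + t * c)" for w r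
    unfolding M_def span_breakdown_eq span_singleton by (fastforce simp: algebra_simps)
  have M_mem: "(s *\<^sub>R x + t *\<^sub>R v, s * a + t * c) \<in> M" for s t
    using M_iff by blast
  have M_le: "r \<le> p w" if "(w, r) \<in> M" for w r
    using that dom unfolding M_iff by blast
  define q where "q = (\<lambda>y. INF (w, r)\<in>M. p (y + w) - r)"
  have q_le: "q y \<le> p (y + (s *\<^sub>R x + t *\<^sub>R v)) - (s * a + t * c)" for y s t
    unfolding q_def by (rule INF_cone_le[OF p M M_le M_mem])
  obtain g where g: "linear g" "g \<le> q"
    using sublinear_dominates_linear[OF sublinear_INF_cone[OF p M M_le]] by (auto simp: q_def)
  have g_le: "g y \<le> p (y + (s *\<^sub>R x + t *\<^sub>R v)) - (s * a + t * c)" for y s t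
    using le_funD[OF g(2), of y] q_le[of y s t] by linarith
  \<comment> \<open>testing \<open>g\<close> against \<open>\<plusminus>x\<close> and \<open>\<plusminus>v\<close> with the pairs that cancel them\<close>
  have "g x \<le> a" "- g x \<le> - a" "g v \<le> c" "- g v \<le> - c"
    using g_le[of x "-1" 0] g_le[of "- x" 1 0] g_le[of v 0 "-1"] g_le[of "- v" 0 1]
      sublinear_0[OF p] linear_neg[OF g(1)] by simp_all
  moreover have "g \<le> p"
    using g_le[of _ 0 0] by (simp add: le_fun_def)
  ultimately show ?thesis using g(1) by (intro exI[of _ g]) simp
qed

lemma le_norm_imp_supp_funcs:
  fixes g :: "'a::real_normed_vector \<Rightarrow> real"
  assumes g: "linear g" "g \<le> norm" "g x = norm x" and x: "x \<noteq> 0"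
  shows "g \<in> supp_funcs x"
proof -
  have abs_le: "\<bar>g y\<bar> \<le> norm y" for y
    by (rule abs_le_norm_if_le_norm[OF g(1,2)])
  have bl: "bounded_linear g"
    using g(1) abs_le by (intro bounded_linear_intro[where K = 1]) (simp_all add: linear_add linear_scale)
  have "onorm g \<le> 1" by (rule onorm_bound) (simp_all add: abs_le)
  moreover have "norm (g x) / norm x \<le> onorm g" by (rule le_onorm[OF bl])
  ultimately have "onorm g = 1" using g(3) x by simp
  then show ?thesis unfolding supp_funcs_def using bl g(3) by simp
qed

lemma norming_functional_exists:
  fixes x :: "'a::real_normed_vector"
  shows "\<exists>g. linear g \<and> g \<le> norm \<and> g x = norm x"
proof -
  have "s * norm x + t * 0 \<le> norm (s *\<^sub>R x + t *\<^sub>R 0)" for s t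
    by (simp add: mult_right_mono)
  then show ?thesis using hahn_banach_pair[OF sublinear_norm] by blast
qed

lemma bj_orth_scaleR_le:
  fixes x w :: "'a::real_normed_vector"
  assumes "bj_orth x w"
  shows "\<bar>s\<bar> * norm x \<le> norm (s *\<^sub>R x + t *\<^sub>R w)"
proof (cases "s = 0")
  case False
  have "\<bar>s\<bar> * norm x \<le> \<bar>s\<bar> * norm (x + (t / s) *\<^sub>R w)"
    using assms by (simp add: bj_orth_def mult_left_mono)
  also have "\<dots> = norm (s *\<^sub>R x + t *\<^sub>R w)"
    using False by (simp add: scaleR_right_distrib flip: norm_scaleR)
  finally show ?thesis .
qed simp

lemma bj_orth_imp_supp_funcs:
  fixes x v :: "'a::real_normed_vector"
  assumes x: "x \<noteq> 0" and orth: "bj_orth x (v - a *\<^sub>R x)"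
  shows "\<exists>g\<in>supp_funcs x. g v = a * norm x"
proof -
  have "s * norm x + t * (a * norm x) \<le> norm (s *\<^sub>R x + t *\<^sub>R v)" for s t
  proof -
    have "s * norm x + t * (a * norm x) \<le> \<bar>s + t * a\<bar> * norm x"
      by (metis abs_ge_self distrib_right mult.assoc mult_right_mono norm_ge_zero)
    also have "\<dots> \<le> norm ((s + t * a) *\<^sub>R x + t *\<^sub>R (v - a *\<^sub>R x))"
      by (rule bj_orth_scaleR_le[OF orth])
    also have "(s + t * a) *\<^sub>R x + t *\<^sub>R (v - a *\<^sub>R x) = s *\<^sub>R x + t *\<^sub>R v"
      by (simp add: algebra_simps)
    finally show ?thesis .
  qed
  then obtain g where "linear g" "g \<le> norm" "g x = norm x" "g v = a * norm x"
    using hahn_banach_pair[OF sublinear_norm] by blast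
  then show ?thesis using le_norm_imp_supp_funcs[OF _ _ _ x] by blast
qed

lemma smooth_point_bj_orth_unique:
  fixes x v :: "'a::real_normed_vector"
  assumes x: "x \<in> smooth_points"
    and "bj_orth x (v - a *\<^sub>R x)" "bj_orth x (v - b *\<^sub>R x)"
  shows "a = b"
proof -
  from x obtain f where x0: "x \<noteq> 0" and f: "supp_funcs x = {f}"
    unfolding smooth_points_def by blast
  obtain g h where "g \<in> supp_funcs x" "g v = a * norm x" "h \<in> supp_funcs x" "h v = b * norm x"
    using bj_orth_imp_supp_funcs[OF x0] assms(2,3) by metis
  with f x0 show ?thesis by auto
qed

lemma bj_orth_norming_residual:
  fixes x v :: "'a::real_normed_vector"
  assumes g: "linear g" "g \<le> norm" "g x = norm x"
  shows "bj_orth x (v - (g v / norm x) *\<^sub>R x)"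
proof (cases "x = 0")
  case False
  have "g (x + t *\<^sub>R (v - (g v / norm x) *\<^sub>R x)) = norm x" for t
    using False g(3) by (simp add: linear_add[OF g(1)] linear_scale[OF g(1)] linear_diff[OF g(1)])
  then show ?thesis
    unfolding bj_orth_def using le_funD[OF g(2)] by metis
qed (simp add: bj_orth_def)

lemma bj_orth_limit:
  fixes X W :: "nat \<Rightarrow> 'a::real_normed_vector"
  assumes "X \<longlonglongrightarrow> x" "W \<longlonglongrightarrow> w" "\<And>n. bj_orth (X n) (W n)"
  shows "bj_orth x w"
  unfolding bj_orth_def
proof
  fix t :: real
  have "(\<lambda>n. norm (X n)) \<longlonglongrightarrow> norm x" "(\<lambda>n. norm (X n + t *\<^sub>R W n)) \<longlonglongrightarrow> norm (x + t *\<^sub>R w)"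
    by (intro tendsto_intros assms)+
  moreover have "norm (X n) \<le> norm (X n + t *\<^sub>R W n)" for n
    using assms(3) unfolding bj_orth_def by blast
  ultimately show "norm x \<le> norm (x + t *\<^sub>R w)"
    by (intro LIMSEQ_le) auto
qed

lemma LIMSEQ_if_subseq_limits_eq:
  fixes b :: "nat \<Rightarrow> 'a::heine_borel"
  assumes bounded: "bounded (range b)"
    and limits: "\<And>r l. strict_mono r \<Longrightarrow> (b \<circ> r) \<longlonglongrightarrow> l \<Longrightarrow> l = L"
  shows "b \<longlonglongrightarrow> L"
proof (rule ccontr)
  assume "\<not> b \<longlonglongrightarrow> L"
  then obtain \<epsilon> where \<epsilon>: "0 < \<epsilon>" "\<exists>\<^sub>F n in sequentially. \<epsilon> \<le> dist (b n) L"
    unfolding tendsto_iff by (auto simp: not_eventually not_less)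
  then have "infinite {n. \<epsilon> \<le> dist (b n) L}"
    by (simp add: frequently_cofinite flip: cofinite_eq_sequentially)
  then obtain r :: "nat \<Rightarrow> nat" where r: "strict_mono r" "\<And>n. \<epsilon> \<le> dist (b (r n)) L"
    using infinite_enumerate by blast
  have "bounded (range (b \<circ> r))"
    by (rule bounded_subset[OF bounded]) auto
  then obtain l s where s: "strict_mono s" "((b \<circ> r) \<circ> s) \<longlonglongrightarrow> l"
    using bounded_imp_convergent_subsequence by blast
  then have "l = L"
    using limits[OF strict_mono_o[OF r(1) s(1)]] by (simp add: o_assoc)
  moreover have "\<epsilon> \<le> dist l L"
    by (rule LIMSEQ_le_const[OF tendsto_dist[OF s(2) tendsto_const]]) (use r(2) in simp)
  ultimately show False using \<epsilon>(1) by simp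
qed

lemma norming_functionals_tendsto_zero:
  fixes X :: "nat \<Rightarrow> 'a::real_normed_vector"
  assumes x: "x \<in> smooth_points" and orth: "bj_orth x v" and X: "X \<longlonglongrightarrow> x"
    and G: "\<And>n. linear (G n)" "\<And>n. G n \<le> norm" "\<And>n. G n (X n) = norm (X n)"
  shows "(\<lambda>n. G n v) \<longlonglongrightarrow> 0"
proof (rule LIMSEQ_if_subseq_limits_eq)
  show "bounded (range (\<lambda>n. G n v))"
    using abs_le_norm_if_le_norm[OF G(1,2)] by (intro boundedI[of _ "norm v"]) auto
  fix r :: "nat \<Rightarrow> nat" and c assume r: "strict_mono r" and c: "((\<lambda>n. G n v) \<circ> r) \<longlonglongrightarrow> c"
  have x0: "x \<noteq> 0" using x by (simp add: smooth_points_def)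
  have "bj_orth x (v - (c / norm x) *\<^sub>R x)"
  proof (rule bj_orth_limit)
    have Xr: "(\<lambda>n. X (r n)) \<longlonglongrightarrow> x"
      using LIMSEQ_subseq_LIMSEQ[OF X r] by (simp add: o_def)
    then show "(\<lambda>n. X (r n)) \<longlonglongrightarrow> x" .
    show "(\<lambda>n. v - (G (r n) v / norm (X (r n))) *\<^sub>R X (r n)) \<longlonglongrightarrow> v - (c / norm x) *\<^sub>R x"
      using c Xr x0 by (intro tendsto_intros) (simp_all add: o_def)
    show "bj_orth (X (r n)) (v - (G (r n) v / norm (X (r n))) *\<^sub>R X (r n))" for n
      by (rule bj_orth_norming_residual[OF G])
  qed
  moreover have "bj_orth x (v - 0 *\<^sub>R x)" using orth by simp
  ultimately have "c / norm x = 0" by (rule smooth_point_bj_orth_unique[OF x])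
  then show "c = 0" using x0 by simp
qed

theorem mainTheorem2:
  fixes T :: "'a::banach \<Rightarrow> 'b::banach" and A :: "'a set"
  assumes "bounded_linear T"
    and "\<forall>x\<in>A. preserves_bj_at T x"
  shows "\<forall>x\<in>closure A \<inter> smooth_points. preserves_bj_at T x"
proof
  fix x assume "x \<in> closure A \<inter> smooth_points"
  then obtain X where XA: "\<And>n. X n \<in> A" and X: "X \<longlonglongrightarrow> x" and x: "x \<in> smooth_points"
    using closure_sequential by blast
  have "\<forall>n. \<exists>g. linear g \<and> g \<le> norm \<and> g (X n) = norm (X n)"
    using norming_functional_exists by blast
  then obtain G where G: "\<And>n. linear (G n)" "\<And>n. G n \<le> norm" "\<And>n. G n (X n) = norm (X n)"
    by metis
  have x0: "x \<noteq> 0" using x by (simp add: smooth_points_def)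
  show "preserves_bj_at T x"
    unfolding preserves_bj_at_def
  proof (intro allI impI)
    fix v assume "bj_orth x v"
    define V where "V n = v - (G n v / norm (X n)) *\<^sub>R X n" for n
    have "V \<longlonglongrightarrow> v - (0 / norm x) *\<^sub>R x"
      unfolding V_def using norming_functionals_tendsto_zero[OF x \<open>bj_orth x v\<close> X G] X x0
      by (intro tendsto_intros) simp_all
    then have V: "V \<longlonglongrightarrow> v" by simp
    show "bj_orth (T x) (T v)"
    proof (rule bj_orth_limit)
      show "(\<lambda>n. T (X n)) \<longlonglongrightarrow> T x" "(\<lambda>n. T (V n)) \<longlonglongrightarrow> T v"
        using bounded_linear.tendsto[OF assms(1)] X V by blast+
      show "bj_orth (T (X n)) (T (V n))" for n
        using assms(2) XA bj_orth_norming_residual[OF G] unfolding preserves_bj_at_def V_def by blast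
    qed
  qed
qed

end
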